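(* Let $R$ be a ring and $M$ a retractable left $R$-module. The following are equivalent: (a) $M$ is uniform and $\mathrm{End}_R(M)$ is a domain; (b) $M$ is uniform and every nonzero endomorphism of $M$ is injective; (c) $\mathrm{End}_R(M)$ is a left Ore domain.
   Context: A left $R$-module $M$ is retractable if $\mathrm{Hom}_R(M,N)\neq0$ for every nonzero submodule $N\subseteq M$. $M$ is uniform if any two nonzero submodules have nonzero intersection. A left Ore domain is a domain $S$ with $Sa\cap Sb\neq0$ for all nonzero $a,b\in S$. Endomorphisms are written on the right, so composition $fg$ means first $f$ then $g$. *)

theory Defs
  imports "HOL-Algebra.Module"
begin

text \<open>The library locale module requires a commutative ring, so we state the
  left-module axioms directly (same axioms as the library, with ring instead of cring).\<close>

definition left_module :: "('a, 'c) ring_scheme \<Rightarrow> ('a, 'b) module \<Rightarrow> bool" where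
  "left_module R M \<longleftrightarrow> ring R \<and> abelian_group M \<and>
     (\<forall>a\<in>carrier R. \<forall>x\<in>carrier M. a \<odot>\<^bsub>M\<^esub> x \<in> carrier M) \<and>
     (\<forall>a\<in>carrier R. \<forall>b\<in>carrier R. \<forall>x\<in>carrier M.
        (a \<oplus>\<^bsub>R\<^esub> b) \<odot>\<^bsub>M\<^esub> x = a \<odot>\<^bsub>M\<^esub> x \<oplus>\<^bsub>M\<^esub> b \<odot>\<^bsub>M\<^esub> x) \<and>
     (\<forall>a\<in>carrier R. \<forall>x\<in>carrier M. \<forall>y\<in>carrier M.
        a \<odot>\<^bsub>M\<^esub> (x \<oplus>\<^bsub>M\<^esub> y) = a \<odot>\<^bsub>M\<^esub> x \<oplus>\<^bsub>M\<^esub> a \<odot>\<^bsub>M\<^esub> y) \<and>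
     (\<forall>a\<in>carrier R. \<forall>b\<in>carrier R. \<forall>x\<in>carrier M.
        (a \<otimes>\<^bsub>R\<^esub> b) \<odot>\<^bsub>M\<^esub> x = a \<odot>\<^bsub>M\<^esub> (b \<odot>\<^bsub>M\<^esub> x)) \<and>
     (\<forall>x\<in>carrier M. \<one>\<^bsub>R\<^esub> \<odot>\<^bsub>M\<^esub> x = x)"

definition lin_hom_into :: "('a, 'c) ring_scheme \<Rightarrow> ('a, 'b) module \<Rightarrow> 'b set \<Rightarrow> ('b \<Rightarrow> 'b) set" where
  "lin_hom_into R M N = {f. f \<in> carrier M \<rightarrow> N \<and> f \<in> extensional (carrier M) \<and>
     (\<forall>x\<in>carrier M. \<forall>y\<in>carrier M. f (x \<oplus>\<^bsub>M\<^esub> y) = f x \<oplus>\<^bsub>M\<^esub> f y) \<and>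
     (\<forall>a\<in>carrier R. \<forall>x\<in>carrier M. f (a \<odot>\<^bsub>M\<^esub> x) = a \<odot>\<^bsub>M\<^esub> f x)}"

definition endos :: "('a, 'c) ring_scheme \<Rightarrow> ('a, 'b) module \<Rightarrow> ('b \<Rightarrow> 'b) set" where
  "endos R M = lin_hom_into R M (carrier M)"

definition zero_map :: "('a, 'b) module \<Rightarrow> 'b \<Rightarrow> 'b" where
  "zero_map M = (\<lambda>x\<in>carrier M. \<zero>\<^bsub>M\<^esub>)"

text \<open>The endomorphism ring End_R(M). Endomorphisms are written on the right,
  so the product f \<otimes> g means first f then g, i.e. g \<circ> f.\<close>

definition End_ring :: "('a, 'c) ring_scheme \<Rightarrow> ('a, 'b) module \<Rightarrow> ('b \<Rightarrow> 'b) ring" where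
  "End_ring R M = \<lparr> carrier = endos R M,
     monoid.mult = (\<lambda>f g. compose (carrier M) g f),
     one = (\<lambda>x\<in>carrier M. x),
     zero = zero_map M,
     add = (\<lambda>f g. \<lambda>x\<in>carrier M. f x \<oplus>\<^bsub>M\<^esub> g x) \<rparr>"

definition retractable :: "('a, 'c) ring_scheme \<Rightarrow> ('a, 'b) module \<Rightarrow> bool" where
  "retractable R M \<longleftrightarrow> (\<forall>N. submodule N R M \<and> N \<noteq> {\<zero>\<^bsub>M\<^esub>} \<longrightarrow>
      (\<exists>f\<in>lin_hom_into R M N. f \<noteq> zero_map M))"

definition uniform :: "('a, 'c) ring_scheme \<Rightarrow> ('a, 'b) module \<Rightarrow> bool" where
  "uniform R M \<longleftrightarrow> carrier M \<noteq> {\<zero>\<^bsub>M\<^esub>} \<and>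
     (\<forall>N1 N2. submodule N1 R M \<and> submodule N2 R M \<and> N1 \<noteq> {\<zero>\<^bsub>M\<^esub>} \<and> N2 \<noteq> {\<zero>\<^bsub>M\<^esub>}
        \<longrightarrow> N1 \<inter> N2 \<noteq> {\<zero>\<^bsub>M\<^esub>})"

definition nc_domain :: "('a, 'c) ring_scheme \<Rightarrow> bool" where
  "nc_domain S \<longleftrightarrow> ring S \<and> \<one>\<^bsub>S\<^esub> \<noteq> \<zero>\<^bsub>S\<^esub> \<and>
     (\<forall>a\<in>carrier S. \<forall>b\<in>carrier S. a \<otimes>\<^bsub>S\<^esub> b = \<zero>\<^bsub>S\<^esub> \<longrightarrow> a = \<zero>\<^bsub>S\<^esub> \<or> b = \<zero>\<^bsub>S\<^esub>)"

definition left_ore_domain :: "('a, 'c) ring_scheme \<Rightarrow> bool" where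
  "left_ore_domain S \<longleftrightarrow> nc_domain S \<and>
     (\<forall>a\<in>carrier S - {\<zero>\<^bsub>S\<^esub>}. \<forall>b\<in>carrier S - {\<zero>\<^bsub>S\<^esub>}.
        \<exists>s\<in>carrier S. \<exists>t\<in>carrier S. s \<otimes>\<^bsub>S\<^esub> a = t \<otimes>\<^bsub>S\<^esub> b \<and> s \<otimes>\<^bsub>S\<^esub> a \<noteq> \<zero>\<^bsub>S\<^esub>)"

end

theory Submission
  imports Defs
begin

(* After the basic algebra of endomorphisms (End_R(M) is a ring; kernels, images
   and intersections of submodules are submodules), the argument has four steps:
   - retractability turns a nonzero kernel into a nonzero zero divisor, so in a
     domain End_R(M) nonzero endomorphisms are injective ((a) => (b));
   - if nonzero endomorphisms are injective, End_R(M) has no zero divisors ((b) => (a));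
   - an endomorphism whose image lies in the image of an injective endomorphism a
     factors through a; applied to a nonzero map into Im a \<inter> Im b (which exists by
     uniformity and retractability) this gives the Ore condition ((b) => (c));
   - conversely, Ore common multiples of nonzero maps into two nonzero submodules
     produce a nonzero element of their intersection, so M is uniform; with the
     first step this gives (c) => (b). *)

text \<open>The part of the left-module axioms needed below; the ring R only acts through
  scalar multiplication, and no compatibility with the ring structure of R is used.\<close>

locale left_mod = abelian_group M for R :: "('a, 'c) ring_scheme" and M :: "('a, 'b) module" (structure) +
  assumes smult_closed: "\<And>a x. a \<in> carrier R \<Longrightarrow> x \<in> carrier M \<Longrightarrow> a \<odot>\<^bsub>M\<^esub> x \<in> carrier M"
    and smult_r_distr: "\<And>a x y. a \<in> carrier R \<Longrightarrow> x \<in> carrier M \<Longrightarrow> y \<in> carrier M \<Longrightarrow>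
        a \<odot>\<^bsub>M\<^esub> (x \<oplus> y) = a \<odot>\<^bsub>M\<^esub> x \<oplus> a \<odot>\<^bsub>M\<^esub> y"

lemma left_module_imp_left_mod: "left_module R M \<Longrightarrow> left_mod R M"
  unfolding left_module_def left_mod_def left_mod_axioms_def by blast

context left_mod
begin

lemma additive_zero_neg:
  assumes closed: "\<And>x. x \<in> carrier M \<Longrightarrow> h x \<in> carrier M"
    and additive: "\<And>x y. x \<in> carrier M \<Longrightarrow> y \<in> carrier M \<Longrightarrow> h (x \<oplus> y) = h x \<oplus> h y"
  shows "h \<zero> = \<zero>" and "\<And>x. x \<in> carrier M \<Longrightarrow> h (\<ominus> x) = \<ominus> h x"
proof -
  have "h \<zero> \<oplus> h \<zero> = h \<zero> \<oplus> \<zero>" using additive[of \<zero> \<zero>] closed by simp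
  then show zero: "h \<zero> = \<zero>" using closed by simp
  fix x assume x: "x \<in> carrier M"
  have "h (\<ominus> x) \<oplus> h x = \<zero>" using additive[of "\<ominus> x" x] x zero by (simp add: l_neg)
  then show "h (\<ominus> x) = \<ominus> h x" using closed x by (simp add: minus_equality)
qed

lemma smult_zero: "a \<in> carrier R \<Longrightarrow> a \<odot>\<^bsub>M\<^esub> \<zero> = \<zero>"
  by (rule additive_zero_neg(1)) (simp_all add: smult_closed smult_r_distr)

lemma smult_neg: "a \<in> carrier R \<Longrightarrow> x \<in> carrier M \<Longrightarrow> a \<odot>\<^bsub>M\<^esub> (\<ominus> x) = \<ominus> (a \<odot>\<^bsub>M\<^esub> x)"
  by (rule additive_zero_neg(2)) (simp_all add: smult_closed smult_r_distr)

lemma endoD: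
  assumes "f \<in> endos R M"
  shows "\<And>x. x \<in> carrier M \<Longrightarrow> f x \<in> carrier M"
    and "f \<in> extensional (carrier M)"
    and "\<And>x y. x \<in> carrier M \<Longrightarrow> y \<in> carrier M \<Longrightarrow> f (x \<oplus> y) = f x \<oplus> f y"
    and "\<And>a x. a \<in> carrier R \<Longrightarrow> x \<in> carrier M \<Longrightarrow> f (a \<odot>\<^bsub>M\<^esub> x) = a \<odot>\<^bsub>M\<^esub> f x"
  using assms unfolding endos_def lin_hom_into_def by auto

lemma endoI:
  assumes "\<And>x. x \<in> carrier M \<Longrightarrow> f x \<in> carrier M"
    and "f \<in> extensional (carrier M)"
    and "\<And>x y. x \<in> carrier M \<Longrightarrow> y \<in> carrier M \<Longrightarrow> f (x \<oplus> y) = f x \<oplus> f y"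
    and "\<And>a x. a \<in> carrier R \<Longrightarrow> x \<in> carrier M \<Longrightarrow> f (a \<odot>\<^bsub>M\<^esub> x) = a \<odot>\<^bsub>M\<^esub> f x"
  shows "f \<in> endos R M"
  using assms unfolding endos_def lin_hom_into_def by auto

lemma endo_zero: "f \<in> endos R M \<Longrightarrow> f \<zero> = \<zero>"
  by (rule additive_zero_neg(1)) (simp_all add: endoD)

lemma endo_neg: "f \<in> endos R M \<Longrightarrow> x \<in> carrier M \<Longrightarrow> f (\<ominus> x) = \<ominus> f x"
  by (rule additive_zero_neg(2)) (simp_all add: endoD)

lemma endo_minus: "f \<in> endos R M \<Longrightarrow> x \<in> carrier M \<Longrightarrow> y \<in> carrier M \<Longrightarrow> f (x \<ominus> y) = f x \<ominus> f y"
  by (simp add: minus_eq endoD endo_neg)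

text \<open>Endomorphisms are extensional, so being the zero map is a pointwise condition.\<close>

lemma endo_eq_zero_iff: "f \<in> endos R M \<Longrightarrow> f = zero_map M \<longleftrightarrow> (\<forall>x\<in>carrier M. f x = \<zero>)"
  unfolding zero_map_def using endoD(2) by (auto intro: extensionalityI[where A="carrier M"])

lemma endo_nonzero_iff: "f \<in> endos R M \<Longrightarrow> f \<noteq> zero_map M \<longleftrightarrow> (\<exists>x\<in>carrier M. f x \<noteq> \<zero>)"
  using endo_eq_zero_iff by blast

lemma lin_hom_into_endos: "N \<subseteq> carrier M \<Longrightarrow> lin_hom_into R M N \<subseteq> endos R M"
  unfolding endos_def lin_hom_into_def by auto

lemma lin_hom_into_image: "f \<in> lin_hom_into R M N \<Longrightarrow> f ` carrier M \<subseteq> N"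
  unfolding lin_hom_into_def by auto

lemma endos_add: "f \<in> endos R M \<Longrightarrow> g \<in> endos R M \<Longrightarrow> (\<lambda>x\<in>carrier M. f x \<oplus> g x) \<in> endos R M"
  by (rule endoI) (simp_all add: endoD a_ac smult_r_distr smult_closed)

lemma endos_neg: "f \<in> endos R M \<Longrightarrow> (\<lambda>x\<in>carrier M. \<ominus> f x) \<in> endos R M"
  by (rule endoI) (simp_all add: endoD smult_neg smult_closed minus_add)

lemma endos_comp: "f \<in> endos R M \<Longrightarrow> g \<in> endos R M \<Longrightarrow> compose (carrier M) g f \<in> endos R M"
  by (rule endoI) (simp_all add: endoD compose_eq smult_closed)

lemma endos_id: "(\<lambda>x\<in>carrier M. x) \<in> endos R M"
  by (rule endoI) (simp_all add: smult_closed)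

lemma endos_zero: "zero_map M \<in> endos R M"
  by (rule endoI) (simp_all add: zero_map_def smult_zero smult_closed)

lemma End_ring_simps:
  "carrier (End_ring R M) = endos R M"
  "f \<otimes>\<^bsub>End_ring R M\<^esub> g = compose (carrier M) g f"
  "\<one>\<^bsub>End_ring R M\<^esub> = (\<lambda>x\<in>carrier M. x)"
  "\<zero>\<^bsub>End_ring R M\<^esub> = zero_map M"
  "f \<oplus>\<^bsub>End_ring R M\<^esub> g = (\<lambda>x\<in>carrier M. f x \<oplus> g x)"
  by (simp_all add: End_ring_def)

lemma End_ring_abelian_group: "abelian_group (End_ring R M)"
proof (rule abelian_groupI, simp_all only: End_ring_simps)
  fix f assume f: "f \<in> endos R M"
  show "\<exists>g\<in>endos R M. (\<lambda>x\<in>carrier M. g x \<oplus> f x) = zero_map M"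
  proof
    show "(\<lambda>x\<in>carrier M. \<ominus> f x) \<in> endos R M" using f by (rule endos_neg)
    show "(\<lambda>x\<in>carrier M. (\<lambda>x\<in>carrier M. \<ominus> f x) x \<oplus> f x) = zero_map M"
      unfolding zero_map_def by (rule restrict_ext) (simp add: endoD[OF f] l_neg)
  qed
  show "(\<lambda>x\<in>carrier M. zero_map M x \<oplus> f x) = f"
    by (rule extensionalityI[where A="carrier M"]) (simp_all add: endoD[OF f] zero_map_def)
qed (auto intro: restrict_ext simp: endos_add endos_zero endoD a_ac)

lemma End_ring_monoid: "monoid (End_ring R M)"
  by (rule monoidI, simp_all only: End_ring_simps)
    (auto intro: endos_comp endos_id extensionalityI[where A="carrier M"] simp: compose_eq endoD)

lemma End_ring_is_ring: "ring (End_ring R M)"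
  by (rule ringI[OF End_ring_abelian_group End_ring_monoid], unfold End_ring_simps)
    (auto intro: extensionalityI[where A="carrier M"] simp: compose_eq endoD)

lemma submoduleI':
  assumes "H \<subseteq> carrier M" "\<zero> \<in> H" "\<And>a. a \<in> H \<Longrightarrow> \<ominus> a \<in> H"
    "\<And>a b. a \<in> H \<Longrightarrow> b \<in> H \<Longrightarrow> a \<oplus> b \<in> H"
    "\<And>a x. a \<in> carrier R \<Longrightarrow> x \<in> H \<Longrightarrow> a \<odot>\<^bsub>M\<^esub> x \<in> H"
  shows "submodule H R M"
  by (intro submodule.intro subgroup.intro submodule_axioms.intro) (use assms in \<open>auto simp: a_inv_def\<close>)

lemma submoduleD:
  assumes "submodule N R M"
  shows "N \<subseteq> carrier M" "\<zero> \<in> N" "\<And>a. a \<in> N \<Longrightarrow> \<ominus> a \<in> N"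
    "\<And>a b. a \<in> N \<Longrightarrow> b \<in> N \<Longrightarrow> a \<oplus> b \<in> N"
    "\<And>a x. a \<in> carrier R \<Longrightarrow> x \<in> N \<Longrightarrow> a \<odot>\<^bsub>M\<^esub> x \<in> N"
proof -
  have sg: "subgroup N (add_monoid M)" by (rule submodule.axioms(1)[OF assms])
  show "N \<subseteq> carrier M" using subgroup.subset[OF sg] by simp
  show "\<zero> \<in> N" using subgroup.one_closed[OF sg] by simp
  show "\<And>a. a \<in> N \<Longrightarrow> \<ominus> a \<in> N" using subgroup.m_inv_closed[OF sg] unfolding a_inv_def by simp
  show "\<And>a b. a \<in> N \<Longrightarrow> b \<in> N \<Longrightarrow> a \<oplus> b \<in> N" using subgroup.m_closed[OF sg] by simp
  show "\<And>a x. a \<in> carrier R \<Longrightarrow> x \<in> N \<Longrightarrow> a \<odot>\<^bsub>M\<^esub> x \<in> N"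
    by (rule submodule.smult_closed[OF assms])
qed

lemma kernel_submodule: "f \<in> endos R M \<Longrightarrow> submodule {x\<in>carrier M. f x = \<zero>} R M"
  by (rule submoduleI') (auto simp: endo_zero endo_neg endoD smult_closed smult_zero)

lemma image_submodule:
  assumes f: "f \<in> endos R M"
  shows "submodule (f ` carrier M) R M"
proof (rule submoduleI')
  show "f ` carrier M \<subseteq> carrier M" using endoD(1)[OF f] by auto
  show "\<zero> \<in> f ` carrier M" using endo_zero[OF f] zero_closed by (metis image_eqI)
  show "\<ominus> u \<in> f ` carrier M" if "u \<in> f ` carrier M" for u
  proof -
    from that obtain x where "x \<in> carrier M" "u = f x" by blast
    then show ?thesis using endo_neg[OF f] by (metis a_inv_closed image_eqI)
  qed
  show "u \<oplus> v \<in> f ` carrier M" if "u \<in> f ` carrier M" "v \<in> f ` carrier M" for u v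
  proof -
    from that obtain x y where "x \<in> carrier M" "y \<in> carrier M" "u = f x" "v = f y" by blast
    then show ?thesis using endoD(3)[OF f] by (metis a_closed image_eqI)
  qed
  show "c \<odot>\<^bsub>M\<^esub> u \<in> f ` carrier M" if "c \<in> carrier R" "u \<in> f ` carrier M" for c u
  proof -
    from that obtain x where "x \<in> carrier M" "u = f x" by blast
    then show ?thesis using endoD(4)[OF f] smult_closed \<open>c \<in> carrier R\<close> by (metis image_eqI)
  qed
qed

lemma inter_submodule: "submodule N1 R M \<Longrightarrow> submodule N2 R M \<Longrightarrow> submodule (N1 \<inter> N2) R M"
  by (rule submoduleI') (auto dest: submoduleD)

lemma retractable_endo_into:
  assumes "retractable R M" and "submodule N R M" and "N \<noteq> {\<zero>}"
  obtains g where "g \<in> endos R M" "g \<noteq> zero_map M" "g ` carrier M \<subseteq> N"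
proof -
  obtain g where "g \<in> lin_hom_into R M N" "g \<noteq> zero_map M"
    using assms unfolding retractable_def by blast
  then show ?thesis
    using that lin_hom_into_endos[OF submoduleD(1)[OF assms(2)]] lin_hom_into_image by blast
qed

text \<open>(a) \<Longrightarrow> (b): a nonzero f with nonzero kernel K is killed by a nonzero map M \<rightarrow> K,
  which exists by retractability; this is a pair of zero divisors in End_R(M).\<close>

lemma domain_imp_nonzero_endos_inj:
  assumes dom: "nc_domain (End_ring R M)" and ret: "retractable R M"
    and f: "f \<in> endos R M" and f_nz: "f \<noteq> zero_map M"
  shows "inj_on f (carrier M)"
proof (rule inj_onI, rule ccontr)
  fix x y assume x: "x \<in> carrier M" and y: "y \<in> carrier M" and fxy: "f x = f y" and "x \<noteq> y"
  let ?K = "{z\<in>carrier M. f z = \<zero>}"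
  have "x \<ominus> y \<in> ?K" using endo_minus[OF f x y] fxy endoD(1)[OF f y] x y by (simp add: minus_eq r_neg)
  moreover have "x \<ominus> y \<oplus> y = x" using x y by (simp add: minus_eq a_assoc l_neg)
  then have "x \<ominus> y \<noteq> \<zero>" using \<open>x \<noteq> y\<close> y by auto
  ultimately have "?K \<noteq> {\<zero>}" by blast
  then obtain g where g: "g \<in> endos R M" "g \<noteq> zero_map M" "g ` carrier M \<subseteq> ?K"
    using retractable_endo_into[OF ret kernel_submodule[OF f]] by blast
  have "compose (carrier M) f g = zero_map M"
    using g(3) endo_eq_zero_iff[OF endos_comp[OF g(1) f]] by (auto simp: compose_eq)
  then have "g \<otimes>\<^bsub>End_ring R M\<^esub> f = \<zero>\<^bsub>End_ring R M\<^esub>" by (simp add: End_ring_simps)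
  then show False using dom g(1,2) f f_nz unfolding nc_domain_def by (auto simp: End_ring_simps)
qed

text \<open>(b) \<Longrightarrow> (a): if nonzero endomorphisms are injective, a composite of two nonzero
  endomorphisms is nonzero; M \<noteq> 0 makes the identity nonzero.\<close>

lemma nonzero_endos_inj_imp_domain:
  assumes inj: "\<forall>f\<in>endos R M. f \<noteq> zero_map M \<longrightarrow> inj_on f (carrier M)"
    and M_nz: "carrier M \<noteq> {\<zero>}"
  shows "nc_domain (End_ring R M)"
  unfolding nc_domain_def
proof (intro conjI ballI impI)
  show "ring (End_ring R M)" by (rule End_ring_is_ring)
  obtain x where x: "x \<in> carrier M" "x \<noteq> \<zero>" using M_nz zero_closed by blast
  then have "(\<lambda>x\<in>carrier M. x) x \<noteq> zero_map M x" by (simp add: zero_map_def)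
  then show "\<one>\<^bsub>End_ring R M\<^esub> \<noteq> \<zero>\<^bsub>End_ring R M\<^esub>" unfolding End_ring_simps by metis
next
  fix a b assume "a \<in> carrier (End_ring R M)" "b \<in> carrier (End_ring R M)"
    and ab: "a \<otimes>\<^bsub>End_ring R M\<^esub> b = \<zero>\<^bsub>End_ring R M\<^esub>"
  then have a: "a \<in> endos R M" and b: "b \<in> endos R M" by (simp_all add: End_ring_simps)
  have ba_zero: "\<And>y. y \<in> carrier M \<Longrightarrow> b (a y) = b \<zero>"
    using ab endo_eq_zero_iff[OF endos_comp[OF a b]] endo_zero[OF b]
    by (simp add: End_ring_simps compose_eq)
  show "a = \<zero>\<^bsub>End_ring R M\<^esub> \<or> b = \<zero>\<^bsub>End_ring R M\<^esub>"
  proof (rule disjCI)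
    assume "b \<noteq> \<zero>\<^bsub>End_ring R M\<^esub>"
    then have "inj_on b (carrier M)" using inj b by (simp add: End_ring_simps)
    then have "\<forall>y\<in>carrier M. a y = \<zero>" using ba_zero endoD(1)[OF a] by (meson inj_onD zero_closed)
    then show "a = \<zero>\<^bsub>End_ring R M\<^esub>" using endo_eq_zero_iff[OF a] by (simp add: End_ring_simps)
  qed
qed

text \<open>An endomorphism h whose image lies in the image of an injective endomorphism a
  factors as h = a \<circ> s; the factor s = a\<inverse> \<circ> h is linear because a is injective.\<close>

lemma factor_through_injective:
  assumes a: "a \<in> endos R M" and a_inj: "inj_on a (carrier M)" and h: "h \<in> endos R M"
    and image: "h ` carrier M \<subseteq> a ` carrier M"
  obtains s where "s \<in> endos R M" "compose (carrier M) a s = h"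
proof
  define s where "s = (\<lambda>x\<in>carrier M. inv_into (carrier M) a (h x))"
  have s_closed: "s x \<in> carrier M" and a_s: "a (s x) = h x" if "x \<in> carrier M" for x
    using that image by (auto simp: s_def inv_into_into f_inv_into_f)
  have cancel: "u = v" if "u \<in> carrier M" "v \<in> carrier M" "a u = a v" for u v
    using a_inj that by (meson inj_onD)
  show "s \<in> endos R M"
  proof (rule endoI)
    show "s \<in> extensional (carrier M)" by (simp add: s_def)
    show "s (x \<oplus> y) = s x \<oplus> s y" if "x \<in> carrier M" "y \<in> carrier M" for x y
      by (rule cancel) (simp_all add: that s_closed a_s endoD[OF a] endoD[OF h])
    show "s (c \<odot>\<^bsub>M\<^esub> x) = c \<odot>\<^bsub>M\<^esub> s x" if "c \<in> carrier R" "x \<in> carrier M" for c x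
      by (rule cancel) (simp_all add: that s_closed a_s endoD[OF a] endoD[OF h] smult_closed)
  qed (rule s_closed)
  show "compose (carrier M) a s = h"
    by (rule extensionalityI[where A="carrier M"]) (simp_all add: compose_eq a_s endoD[OF h])
qed

text \<open>(b) \<Longrightarrow> (c): for nonzero a, b the submodule Im a \<inter> Im b is nonzero by uniformity,
  so it receives a nonzero map h; factoring h through a and through b gives
  s \<otimes> a = t \<otimes> b = h \<noteq> 0.\<close>

lemma uniform_inj_imp_ore_condition:
  assumes unif: "uniform R M" and ret: "retractable R M"
    and inj: "\<forall>f\<in>endos R M. f \<noteq> zero_map M \<longrightarrow> inj_on f (carrier M)"
    and a: "a \<in> endos R M" "a \<noteq> zero_map M" and b: "b \<in> endos R M" "b \<noteq> zero_map M"
  shows "\<exists>s\<in>endos R M. \<exists>t\<in>endos R M. compose (carrier M) a s = compose (carrier M) b t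
           \<and> compose (carrier M) a s \<noteq> zero_map M"
proof -
  let ?N = "a ` carrier M \<inter> b ` carrier M"
  have "?N \<noteq> {\<zero>}"
    using unif image_submodule[OF a(1)] image_submodule[OF b(1)]
      endo_nonzero_iff[OF a(1)] endo_nonzero_iff[OF b(1)] a(2) b(2)
    unfolding uniform_def by blast
  then obtain h where h: "h \<in> endos R M" "h \<noteq> zero_map M" "h ` carrier M \<subseteq> ?N"
    using retractable_endo_into[OF ret inter_submodule[OF image_submodule[OF a(1)] image_submodule[OF b(1)]]]
    by blast
  obtain s where s: "s \<in> endos R M" "compose (carrier M) a s = h"
    using factor_through_injective[OF a(1) _ h(1)] inj a h(3) by blast
  obtain t where t: "t \<in> endos R M" "compose (carrier M) b t = h"
    using factor_through_injective[OF b(1) _ h(1)] inj b h(3) by blast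
  show ?thesis using s t h(2) by (intro bexI[where x=s] bexI[where x=t]) auto
qed

lemma uniform_inj_imp_left_ore_domain:
  assumes unif: "uniform R M" and ret: "retractable R M"
    and inj: "\<forall>f\<in>endos R M. f \<noteq> zero_map M \<longrightarrow> inj_on f (carrier M)"
  shows "left_ore_domain (End_ring R M)"
  unfolding left_ore_domain_def End_ring_simps
  using nonzero_endos_inj_imp_domain[OF inj] unif uniform_inj_imp_ore_condition[OF unif ret inj]
  unfolding uniform_def by blast

text \<open>(c) \<Longrightarrow> uniform: given nonzero submodules N1, N2, choose nonzero maps f1, f2 into
  them; an Ore common multiple f1 \<circ> s = f2 \<circ> t \<noteq> 0 takes a nonzero value in N1 \<inter> N2.\<close>

lemma left_ore_domain_imp_uniform:
  assumes ore: "left_ore_domain (End_ring R M)" and ret: "retractable R M"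
  shows "uniform R M"
  unfolding uniform_def
proof (intro conjI allI impI)
  have one_nz: "\<one>\<^bsub>End_ring R M\<^esub> \<noteq> \<zero>\<^bsub>End_ring R M\<^esub>"
    using ore unfolding left_ore_domain_def nc_domain_def by blast
  show "carrier M \<noteq> {\<zero>}"
  proof
    assume "carrier M = {\<zero>}"
    then have "(\<lambda>x\<in>carrier M. x) = zero_map M" unfolding zero_map_def by (intro restrict_ext) simp
    then show False using one_nz by (simp add: End_ring_simps)
  qed
  fix N1 N2 assume N: "submodule N1 R M \<and> submodule N2 R M \<and> N1 \<noteq> {\<zero>} \<and> N2 \<noteq> {\<zero>}"
  obtain f1 where f1: "f1 \<in> endos R M" "f1 \<noteq> zero_map M" "f1 ` carrier M \<subseteq> N1"
    using retractable_endo_into[OF ret] N by blast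
  obtain f2 where f2: "f2 \<in> endos R M" "f2 \<noteq> zero_map M" "f2 ` carrier M \<subseteq> N2"
    using retractable_endo_into[OF ret] N by blast
  have "\<exists>s\<in>endos R M. \<exists>t\<in>endos R M.
      compose (carrier M) f1 s = compose (carrier M) f2 t \<and> compose (carrier M) f1 s \<noteq> zero_map M"
    using ore f1(1,2) f2(1,2) unfolding left_ore_domain_def by (simp add: End_ring_simps)
  then obtain s t where st: "s \<in> endos R M" "t \<in> endos R M"
    "compose (carrier M) f1 s = compose (carrier M) f2 t" "compose (carrier M) f1 s \<noteq> zero_map M"
    by blast
  obtain x where x: "x \<in> carrier M" "f1 (s x) \<noteq> \<zero>"
    using endo_nonzero_iff[OF endos_comp[OF st(1) f1(1)]] st(4) by (auto simp: compose_eq)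
  have "f1 (s x) = f2 (t x)" using st(3) x(1) by (metis compose_eq)
  moreover have "f1 (s x) \<in> N1" using f1(3) endoD(1)[OF st(1) x(1)] by blast
  moreover have "f2 (t x) \<in> N2" using f2(3) endoD(1)[OF st(2) x(1)] by blast
  ultimately have "f1 (s x) \<in> N1 \<inter> N2" by simp
  then show "N1 \<inter> N2 \<noteq> {\<zero>}" using x(2) by blast
qed

end

theorem proposition3p1:
  fixes R :: "('a, 'c) ring_scheme" and M :: "('a, 'b) module"
  assumes "ring R" and "left_module R M" and "retractable R M"
  shows "((uniform R M \<and> nc_domain (End_ring R M)) \<longleftrightarrow>
          (uniform R M \<and> (\<forall>f\<in>endos R M. f \<noteq> zero_map M \<longrightarrow> inj_on f (carrier M))))
       \<and> ((uniform R M \<and> (\<forall>f\<in>endos R M. f \<noteq> zero_map M \<longrightarrow> inj_on f (carrier M))) \<longleftrightarrow>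
          left_ore_domain (End_ring R M))"
proof -
  interpret left_mod R M by (rule left_module_imp_left_mod[OF assms(2)])
  note ret = \<open>retractable R M\<close>
  have a_iff_b: "(uniform R M \<and> nc_domain (End_ring R M)) \<longleftrightarrow>
      (uniform R M \<and> (\<forall>f\<in>endos R M. f \<noteq> zero_map M \<longrightarrow> inj_on f (carrier M)))"
    using domain_imp_nonzero_endos_inj[OF _ ret] nonzero_endos_inj_imp_domain
    unfolding uniform_def by blast
  have c_imp_b: "uniform R M \<and> (\<forall>f\<in>endos R M. f \<noteq> zero_map M \<longrightarrow> inj_on f (carrier M))"
    if ore: "left_ore_domain (End_ring R M)"
    using left_ore_domain_imp_uniform[OF ore ret] domain_imp_nonzero_endos_inj[OF _ ret] ore
    unfolding left_ore_domain_def by blast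
  show ?thesis
    using a_iff_b c_imp_b uniform_inj_imp_left_ore_domain[OF _ ret] by blast
qed

end
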